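(* Let $d\ge1$, $t\ge1$ be integers and let $\mu_t$ be a finite Borel measure on $\mathbb S^d$ satisfying the lower Marcinkiewicz–Zygmund inequality of order $t$ with constant $a>0$, i.e. $a\|f\|_{L^2(\mathbb S^d)}^2\le\int_{\mathbb S^d}|f|^2\,d\mu_t$ for all $f\in\Pi_t$. Let $r\in(0,\pi/2]$ and $x\in\mathbb S^d$. If $\operatorname{supp}\mu_t\subseteq B_r(x)$, then \[ (\sin r)^{2t}\ge \frac{a}{\mu_t(\mathbb S^d)}\,\Lambda_{d,t},\qquad\text{where }\Lambda_{d,t}:=\int_{\mathbb S^d}(x\cdot y)^{2t}\,dy . \]
   Context: $\mathbb S^d\subset\mathbb R^{d+1}$ is the unit sphere with normalized surface measure $dy$ (total mass $1$); $\Lambda_{d,t}$ does not depend on $x\in\mathbb S^d$. $B_r(x)=\{y\in\mathbb S^d:x\cdot y\ge\cos r\}$. $\Pi_t$ is the space of restrictions to $\mathbb S^d$ of polynomials in $d+1$ variables of degree at most $t$. *)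

theory Defs
  imports "HOL-Analysis.Analysis"
begin

text \<open>Ambient space R^(d+1) is real^'n with CARD('n) = d+1.\<close>

text \<open>Normalized surface measure on the unit sphere: the radial projection of the
  normalized Lebesgue measure on the unit ball (this is the rotation-invariant
  probability measure on the sphere, i.e. normalized surface measure).\<close>
definition sphere_measure :: "(real^'n) measure" where
  "sphere_measure = distr (uniform_measure lborel (ball 0 1)) borel (\<lambda>x. x /\<^sub>R norm x)"

definition cap :: "real^'n \<Rightarrow> real \<Rightarrow> (real^'n) set" where
  "cap x r = {y \<in> sphere 0 1. x \<bullet> y \<ge> cos r}"

definition poly_deg_le :: "nat \<Rightarrow> (real^'n \<Rightarrow> real) \<Rightarrow> bool" where
  "poly_deg_le t f \<longleftrightarrow> (\<exists>c :: ('n \<Rightarrow> nat) \<Rightarrow> real.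
      \<forall>x. f x = (\<Sum>\<alpha>\<in>{\<alpha>. (\<Sum>i\<in>UNIV. \<alpha> i) \<le> t}. c \<alpha> * (\<Prod>i\<in>UNIV. (x$i) ^ \<alpha> i)))"

definition measure_support :: "'a::topological_space measure \<Rightarrow> 'a set" where
  "measure_support M = {y. \<forall>U. open U \<longrightarrow> y \<in> U \<longrightarrow> emeasure M U > 0}"

end

theory Submission
  imports Defs
begin

text \<open>Pick a unit vector \<open>z\<close> orthogonal to \<open>x\<close>. On the cap \<open>B\<^sub>r(x)\<close> we have
  \<open>(z \<bullet> y)\<^sup>2 \<le> 1 - (x \<bullet> y)\<^sup>2 \<le> sin\<^sup>2 r\<close>, and \<open>\<mu>\<close> lives on that cap, so
  \<open>\<integral> (z \<bullet> y)\<^sup>2\<^sup>t d\<mu> \<le> \<mu>(S\<^sup>d) sin\<^sup>2\<^sup>t r\<close>. Applying the Marcinkiewicz--Zygmund inequality to the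
  polynomial \<open>(z \<bullet> y)\<^sup>t\<close> of degree \<open>t\<close> bounds this integral from below by \<open>a \<integral> (z \<bullet> y)\<^sup>2\<^sup>t dy\<close>,
  which equals \<open>a \<Lambda>\<^sub>d\<^sub>,\<^sub>t\<close> because the surface measure is invariant under the rotation taking
  \<open>x\<close> to \<open>z\<close>.\<close>

section \<open>Invariance of Lebesgue measure under orthogonal maps\<close>

lemma linear_borel_measurable:
  fixes f :: "'a::euclidean_space \<Rightarrow> 'b::euclidean_space"
  assumes "linear f"
  shows "f \<in> borel_measurable borel"
  using assms by (intro borel_measurable_continuous_onI linear_continuous_on) (simp add: linear_conv_bounded_linear)

lemma borel_measurable_orthogonal_transformation:
  fixes f :: "'a::euclidean_space \<Rightarrow> 'a"
  shows "orthogonal_transformation f \<Longrightarrow> f \<in> borel_measurable borel"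
  by (simp add: linear_borel_measurable orthogonal_transformation_linear)

text \<open>The library proves \<open>measure_orthogonal_image\<close> only for index types carrying a
  well-order. An isomorphic copy of the index type, ordered via \<open>to_nat\<close>, transfers it to
  \<open>real^'n\<close> for every finite \<open>'n\<close>.\<close>

typedef 'a ordered_copy = "UNIV :: 'a set" by simp

lemma Rep_Abs_ordered_copy [simp]: "Rep_ordered_copy (Abs_ordered_copy i) = i"
  by (simp add: Abs_ordered_copy_inverse)

instantiation ordered_copy :: (countable) wellorder
begin
definition less_eq_ordered_copy :: "'a ordered_copy \<Rightarrow> 'a ordered_copy \<Rightarrow> bool" where
  "a \<le> b \<longleftrightarrow> to_nat (Rep_ordered_copy a) \<le> to_nat (Rep_ordered_copy b)"
definition less_ordered_copy :: "'a ordered_copy \<Rightarrow> 'a ordered_copy \<Rightarrow> bool" where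
  "a < b \<longleftrightarrow> to_nat (Rep_ordered_copy a) < to_nat (Rep_ordered_copy b)"
instance
proof
  fix P and a :: "'a ordered_copy"
  show "(\<And>x. (\<And>y. y < x \<Longrightarrow> P y) \<Longrightarrow> P x) \<Longrightarrow> P a"
    by (rule measure_induct_rule[of "\<lambda>a. to_nat (Rep_ordered_copy a)"]) (auto simp: less_ordered_copy_def)
qed (auto simp: less_eq_ordered_copy_def less_ordered_copy_def Rep_ordered_copy_inject)
end

instance ordered_copy :: (finite) finite
  by standard (metis finite_imageI finite type_definition.Abs_image type_definition_ordered_copy)

definition to_copy :: "real^'n \<Rightarrow> real^'n ordered_copy" where
  "to_copy v = (\<chi> j. v $ Rep_ordered_copy j)"

definition from_copy :: "real^'n ordered_copy \<Rightarrow> real^'n" where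
  "from_copy w = (\<chi> i. w $ Abs_ordered_copy i)"

lemma from_to_copy [simp]: "from_copy (to_copy v) = v"
  by (simp add: from_copy_def to_copy_def vec_eq_iff)

lemma to_from_copy [simp]: "to_copy (from_copy w) = w"
  by (simp add: from_copy_def to_copy_def Rep_ordered_copy_inverse vec_eq_iff)

lemma linear_to_copy: "linear to_copy"
  by (rule linearI) (auto simp: to_copy_def vec_eq_iff)

lemma linear_from_copy: "linear from_copy"
  by (rule linearI) (auto simp: from_copy_def vec_eq_iff)

lemma prod_UNIV_Rep_ordered_copy: "(\<Prod>j\<in>UNIV. f (Rep_ordered_copy j)) = (\<Prod>i\<in>UNIV. f i)"
  by (rule prod.reindex_bij_witness[where j=Rep_ordered_copy and i=Abs_ordered_copy])
     (auto simp: Rep_ordered_copy_inverse)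

lemma inner_to_copy: "to_copy v \<bullet> to_copy w = v \<bullet> w"
  unfolding inner_vec_def to_copy_def
  by (rule sum.reindex_bij_witness[where j=Rep_ordered_copy and i=Abs_ordered_copy])
     (auto simp: Rep_ordered_copy_inverse)

lemma prod_Basis_cart: "(\<Prod>b\<in>Basis. (v::real^'n) \<bullet> b) = (\<Prod>i\<in>UNIV. v $ i)"
  by (simp add: Basis_vec_def cart_eq_inner_axis axis_eq_axis prod.UNION_disjoint)

lemma vimage_to_copy_box: "to_copy -` box l u = box (from_copy l) (from_copy u)"
  by (auto simp: mem_box_cart to_copy_def from_copy_def)
     (metis Rep_Abs_ordered_copy Rep_ordered_copy_inverse)+

lemma distr_lborel_to_copy: "distr lborel borel (to_copy :: real^'n \<Rightarrow> _) = lborel"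
proof (rule lborel_eqI[symmetric])
  fix l u :: "real^'n ordered_copy"
  assume "\<And>b. b \<in> Basis \<Longrightarrow> l \<bullet> b \<le> u \<bullet> b"
  then have "l $ j \<le> u $ j" for j
    by (simp add: cart_eq_inner_axis)
  then have "\<And>b. b \<in> Basis \<Longrightarrow> from_copy l \<bullet> b \<le> from_copy u \<bullet> b"
    by (auto simp: Basis_vec_def inner_axis from_copy_def)
  then have "emeasure (distr lborel borel to_copy) (box l u) = (\<Prod>i\<in>UNIV. (from_copy u - from_copy l) $ i)"
    using linear_borel_measurable[OF linear_to_copy]
    by (subst emeasure_distr) (auto simp: vimage_to_copy_box emeasure_lborel_box_eq prod_Basis_cart)
  also have "\<dots> = (\<Prod>b\<in>Basis. (u - l) \<bullet> b)"
    using prod_UNIV_Rep_ordered_copy[of "\<lambda>i. (u - l) $ Abs_ordered_copy i"]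
    by (simp add: prod_Basis_cart from_copy_def Rep_ordered_copy_inverse)
  finally show "emeasure (distr lborel borel to_copy) (box l u) = (\<Prod>b\<in>Basis. (u - l) \<bullet> b)" .
qed simp

lemma distr_lborel_from_copy: "distr lborel borel (from_copy :: _ \<Rightarrow> real^'n) = lborel"
proof -
  have "distr lborel borel (from_copy :: _ \<Rightarrow> real^'n) =
        distr (distr lborel borel to_copy) borel from_copy"
    by (simp add: distr_lborel_to_copy)
  also have "\<dots> = distr lborel borel (from_copy \<circ> to_copy)"
    using linear_borel_measurable[OF linear_to_copy] linear_borel_measurable[OF linear_from_copy]
    by (intro distr_distr) auto
  also have "\<dots> = lborel"
    by (simp add: comp_def distr_id2)
  finally show ?thesis .
qed

lemma distr_lborel_orthogonal_transformation_wellorder: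
  fixes Q :: "real^'n::{finite,wellorder} \<Rightarrow> real^'n::_"
  assumes Q: "orthogonal_transformation Q"
  shows "distr lborel borel Q = lborel"
proof (rule lborel_eqI[symmetric])
  fix l u :: "real^'n::_"
  assume "\<And>b. b \<in> Basis \<Longrightarrow> l \<bullet> b \<le> u \<bullet> b"
  then have box: "emeasure lborel (box l u) = (\<Prod>b\<in>Basis. (u - l) \<bullet> b)"
    by (simp add: emeasure_lborel_box_eq)
  have measurable_Q: "Q \<in> borel_measurable borel"
    using Q by (rule borel_measurable_orthogonal_transformation)
  have inv_Q: "orthogonal_transformation (inv Q)"
    using Q by (rule orthogonal_transformation_inv)
  have vimage: "Q -` box l u = inv Q ` box l u"
    using Q by (simp add: bij_vimage_eq_inv_image orthogonal_transformation_bij)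
  have "bounded (Q -` box l u)"
    unfolding vimage using inv_Q
    by (intro bounded_linear_image bounded_box)
       (simp add: orthogonal_transformation_linear flip: linear_conv_bounded_linear)
  then have "emeasure lborel (Q -` box l u) = measure lborel (Q -` box l u)"
    using emeasure_bounded_finite by (intro emeasure_eq_ennreal_measure) fastforce
  also have "measure lborel (Q -` box l u) = measure lebesgue (inv Q ` box l u)"
    using measurable_Q by (simp add: vimage[symmetric] measurable_sets_borel)
  also have "\<dots> = measure lborel (box l u)"
    using inv_Q by (simp add: measure_orthogonal_image)
  also have "ennreal \<dots> = emeasure lborel (box l u)"
    using emeasure_lborel_box_finite[of l u]
    by (intro emeasure_eq_ennreal_measure[symmetric]) simp
  finally show "emeasure (distr lborel borel Q) (box l u) = (\<Prod>b\<in>Basis. (u - l) \<bullet> b)"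
    using measurable_Q by (subst emeasure_distr) (auto simp: box)
qed simp

lemma distr_lborel_orthogonal_transformation:
  fixes Q :: "real^'n \<Rightarrow> real^'n"
  assumes Q: "orthogonal_transformation Q"
  shows "distr lborel borel Q = lborel"
proof -
  define Q' where "Q' = to_copy \<circ> Q \<circ> from_copy"
  have "orthogonal_transformation Q'"
    using Q linear_to_copy linear_from_copy
    by (auto simp: Q'_def orthogonal_transformation_def inner_to_copy intro!: linear_compose)
       (metis inner_to_copy to_from_copy)
  then have "distr lborel borel Q' = lborel"
    by (rule distr_lborel_orthogonal_transformation_wellorder)
  have borel_maps: "to_copy \<in> borel_measurable borel" "from_copy \<in> borel_measurable borel"
    "Q' \<in> borel_measurable borel"
    using linear_to_copy linear_from_copy \<open>orthogonal_transformation Q'\<close>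
    by (auto intro: linear_borel_measurable borel_measurable_orthogonal_transformation)
  have "distr lborel borel (Q' \<circ> to_copy) = distr (distr lborel borel to_copy) borel Q'"
    using borel_maps by (intro distr_distr[symmetric]) auto
  then have Q'_to_copy: "distr lborel borel (Q' \<circ> to_copy) = lborel"
    by (simp add: distr_lborel_to_copy \<open>distr lborel borel Q' = lborel\<close>)
  have Q_eq: "Q = from_copy \<circ> (Q' \<circ> to_copy)"
    by (simp add: Q'_def fun_eq_iff)
  have "distr lborel borel Q = distr (distr lborel borel (Q' \<circ> to_copy)) borel from_copy"
    unfolding Q_eq using borel_maps by (intro distr_distr[symmetric]) (auto intro: measurable_comp)
  then show ?thesis
    by (simp add: Q'_to_copy distr_lborel_from_copy)
qed

section \<open>Rotation invariance of the surface measure\<close>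

lemma distr_uniform_measure_orthogonal_transformation:
  fixes R :: "real^'n \<Rightarrow> real^'n"
  assumes R: "orthogonal_transformation R" and S: "S \<in> sets borel" and invariant: "R -` S = S"
  shows "distr (uniform_measure lborel S) borel R = uniform_measure lborel S"
proof (rule measure_eqI)
  have measurable_R: "R \<in> borel_measurable borel"
    using R by (rule borel_measurable_orthogonal_transformation)
  show "sets (distr (uniform_measure lborel S) borel R) = sets (uniform_measure lborel S)"
    by simp
  fix A assume "A \<in> sets (distr (uniform_measure lborel S) borel R)"
  then have A: "A \<in> sets borel" by simp
  have "emeasure (distr (uniform_measure lborel S) borel R) A
        = emeasure lborel (S \<inter> R -` A) / emeasure lborel S"
    using measurable_R A S by (simp add: emeasure_distr measurable_sets_borel)
  also have "S \<inter> R -` A = R -` (S \<inter> A)"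
    using invariant by auto
  also have "emeasure lborel (R -` (S \<inter> A)) = emeasure (distr lborel borel R) (S \<inter> A)"
    using measurable_R A S by (simp add: emeasure_distr)
  also have "\<dots> = emeasure lborel (S \<inter> A)"
    using R by (simp add: distr_lborel_orthogonal_transformation)
  finally show "emeasure (distr (uniform_measure lborel S) borel R) A = emeasure (uniform_measure lborel S) A"
    using A S by simp
qed

lemma distr_sphere_measure_orthogonal_transformation:
  fixes R :: "real^'n \<Rightarrow> real^'n"
  assumes R: "orthogonal_transformation R"
  shows "distr sphere_measure borel R = sphere_measure"
proof -
  let ?U = "uniform_measure lborel (ball (0::real^'n) 1)"
  let ?p = "\<lambda>x::real^'n. x /\<^sub>R norm x"
  have measurable_R: "R \<in> borel_measurable borel"
    using R by (rule borel_measurable_orthogonal_transformation)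
  have measurable_p: "?p \<in> borel_measurable borel"
    by measurable
  have commute: "R \<circ> ?p = ?p \<circ> R"
    by (simp add: fun_eq_iff orthogonal_transformation_norm[OF R] orthogonal_transformation_scaleR[OF R])
  have "distr sphere_measure borel R = distr ?U borel (R \<circ> ?p)"
    unfolding sphere_measure_def using measurable_R measurable_p by (simp add: distr_distr)
  also have "\<dots> = distr (distr ?U borel R) borel ?p"
    unfolding commute using measurable_R measurable_p by (simp add: distr_distr)
  also have "distr ?U borel R = ?U"
    using R orthogonal_transformation_norm[OF R]
    by (intro distr_uniform_measure_orthogonal_transformation) auto
  finally show ?thesis
    by (simp add: sphere_measure_def)
qed

lemma integral_sphere_measure_inner_unit_vector:
  fixes x z :: "real^'n" and g :: "real \<Rightarrow> real"
  assumes "norm x = 1" "norm z = 1" and g: "g \<in> borel_measurable borel"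
  shows "(\<integral>y. g (z \<bullet> y) \<partial>sphere_measure) = (\<integral>y. g (x \<bullet> y) \<partial>sphere_measure)"
proof -
  obtain Q where Q: "orthogonal_transformation Q" "Q x = z"
    using orthogonal_transformation_exists[of x z] assms by auto
  define R where "R = inv Q"
  have R: "orthogonal_transformation R"
    unfolding R_def using Q(1) by (rule orthogonal_transformation_inv)
  have "z \<bullet> y = Q x \<bullet> Q (R y)" for y
    using Q orthogonal_transformation_surj[OF Q(1)] by (simp add: R_def surj_f_inv_f)
  then have z_inner: "z \<bullet> y = x \<bullet> R y" for y
    using Q(1) by (simp add: orthogonal_transformation_def)
  have "R \<in> measurable sphere_measure borel"
    using borel_measurable_orthogonal_transformation[OF R] by (simp add: sphere_measure_def)
  then have "(\<integral>y. g (x \<bullet> y) \<partial>distr sphere_measure borel R) = (\<integral>y. g (x \<bullet> R y) \<partial>sphere_measure)"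
    using g by (intro integral_distr) auto
  then show ?thesis
    by (simp add: z_inner distr_sphere_measure_orthogonal_transformation[OF R])
qed

section \<open>Polynomials of bounded degree\<close>

definition cart_monomial :: "('n::finite \<Rightarrow> nat) \<Rightarrow> real^'n \<Rightarrow> real" where
  "cart_monomial \<alpha> y = (\<Prod>i\<in>UNIV. (y $ i) ^ \<alpha> i)"

abbreviation exponents_le :: "nat \<Rightarrow> ('n::finite \<Rightarrow> nat) set" where
  "exponents_le n \<equiv> {\<alpha>. (\<Sum>i\<in>UNIV. \<alpha> i) \<le> n}"

lemma poly_deg_le_iff_monomials:
  "poly_deg_le t f \<longleftrightarrow> (\<exists>c. \<forall>y. f y = (\<Sum>\<alpha>\<in>exponents_le t. c \<alpha> * cart_monomial \<alpha> y))"
  by (simp add: poly_deg_le_def cart_monomial_def)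

lemma finite_exponents_le: "finite (exponents_le n :: ('n::finite \<Rightarrow> nat) set)"
proof (rule finite_subset)
  show "exponents_le n \<subseteq> (Pi\<^sub>E (UNIV::'n set) (\<lambda>_. {..n}))"
  proof
    fix \<alpha> :: "'n \<Rightarrow> nat"
    assume "\<alpha> \<in> exponents_le n"
    then have "\<alpha> i \<le> n" for i
      using member_le_sum[of i UNIV \<alpha>] by simp
    then show "\<alpha> \<in> Pi\<^sub>E UNIV (\<lambda>_. {..n})"
      by (simp add: PiE_UNIV_domain)
  qed
qed (intro finite_PiE; simp)

lemma poly_deg_le_const: "poly_deg_le t (\<lambda>y::real^'n. k)"
  unfolding poly_deg_le_iff_monomials
proof (intro exI allI)
  let ?c = "\<lambda>\<alpha>::'n \<Rightarrow> nat. if \<alpha> = (\<lambda>_. 0) then k else 0"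
  fix y :: "real^'n"
  have "(\<Sum>\<alpha>\<in>exponents_le t. ?c \<alpha> * cart_monomial \<alpha> y)
      = (\<Sum>\<alpha>\<in>exponents_le t. if \<alpha> = (\<lambda>_. 0) then k * cart_monomial \<alpha> y else 0)"
    by (intro sum.cong) auto
  also have "\<dots> = k"
    by (simp add: finite_exponents_le cart_monomial_def)
  finally show "k = (\<Sum>\<alpha>\<in>exponents_le t. ?c \<alpha> * cart_monomial \<alpha> y)" ..
qed

lemma poly_deg_le_add:
  assumes "poly_deg_le t f" "poly_deg_le t g"
  shows "poly_deg_le t (\<lambda>y. f y + g y)"
proof -
  obtain c d where "\<And>y. f y = (\<Sum>\<alpha>\<in>exponents_le t. c \<alpha> * cart_monomial \<alpha> y)"
    "\<And>y. g y = (\<Sum>\<alpha>\<in>exponents_le t. d \<alpha> * cart_monomial \<alpha> y)"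
    using assms unfolding poly_deg_le_iff_monomials by blast
  then show ?thesis
    unfolding poly_deg_le_iff_monomials
    by (intro exI[of _ "\<lambda>\<alpha>. c \<alpha> + d \<alpha>"]) (simp add: distrib_right sum.distrib)
qed

lemma poly_deg_le_cmult:
  assumes "poly_deg_le t f"
  shows "poly_deg_le t (\<lambda>y. k * f y)"
proof -
  obtain c where "\<And>y. f y = (\<Sum>\<alpha>\<in>exponents_le t. c \<alpha> * cart_monomial \<alpha> y)"
    using assms unfolding poly_deg_le_iff_monomials by blast
  then show ?thesis
    unfolding poly_deg_le_iff_monomials
    by (intro exI[of _ "\<lambda>\<alpha>. k * c \<alpha>"]) (simp add: sum_distrib_left mult.assoc)
qed

lemma poly_deg_le_sum:
  assumes "finite I" "\<And>i. i \<in> I \<Longrightarrow> poly_deg_le t (f i)"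
  shows "poly_deg_le t (\<lambda>y. \<Sum>i\<in>I. f i y)"
  using assms by (induction I rule: finite_induct) (auto intro: poly_deg_le_const poly_deg_le_add)

lemma cart_monomial_fun_upd_Suc:
  "cart_monomial (\<alpha>(i := Suc (\<alpha> i))) y = y $ i * cart_monomial \<alpha> y"
proof -
  have "(y $ j) ^ (\<alpha>(i := Suc (\<alpha> i))) j = (if j = i then y $ i else 1) * (y $ j) ^ \<alpha> j" for j
    by simp
  then show ?thesis
    unfolding cart_monomial_def by (simp only: prod.distrib) simp
qed

lemma poly_deg_le_coordinate_mult:
  assumes "poly_deg_le n f"
  shows "poly_deg_le (Suc n) (\<lambda>y::real^'n. y $ i * f y)"
proof -
  obtain c where c: "\<And>y. f y = (\<Sum>\<alpha>\<in>exponents_le n. c \<alpha> * cart_monomial \<alpha> y)"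
    using assms unfolding poly_deg_le_iff_monomials by blast
  define raise :: "('n \<Rightarrow> nat) \<Rightarrow> ('n \<Rightarrow> nat)" where "raise \<alpha> = \<alpha>(i := Suc (\<alpha> i))" for \<alpha>
  define lower :: "('n \<Rightarrow> nat) \<Rightarrow> ('n \<Rightarrow> nat)" where "lower \<gamma> = \<gamma>(i := \<gamma> i - 1)" for \<gamma>
  define E where "E = raise ` exponents_le n"
  have lower_raise [simp]: "lower (raise \<alpha>) = \<alpha>" for \<alpha>
    by (simp add: raise_def lower_def)
  then have "inj raise"
    by (metis injI)
  have "raise \<alpha> = (\<lambda>j. \<alpha> j + (if j = i then 1 else 0))" for \<alpha>
    by (simp add: raise_def fun_eq_iff)
  then have "(\<Sum>j\<in>UNIV. raise \<alpha> j) = Suc (\<Sum>j\<in>UNIV. \<alpha> j)" for \<alpha>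
    by (simp add: sum.distrib)
  then have E_subset: "E \<subseteq> exponents_le (Suc n)"
    by (auto simp: E_def)
  define c' where "c' \<gamma> = (if \<gamma> \<in> E then c (lower \<gamma>) else 0)" for \<gamma>
  have "y $ i * f y = (\<Sum>\<gamma>\<in>exponents_le (Suc n). c' \<gamma> * cart_monomial \<gamma> y)" for y
  proof -
    have "y $ i * f y = (\<Sum>\<alpha>\<in>exponents_le n. c \<alpha> * cart_monomial (raise \<alpha>) y)"
      by (simp add: c raise_def cart_monomial_fun_upd_Suc sum_distrib_left mult_ac)
    also have "\<dots> = (\<Sum>\<gamma>\<in>E. c (lower \<gamma>) * cart_monomial \<gamma> y)"
      using \<open>inj raise\<close> by (simp add: E_def sum.reindex inj_on_subset)
    also have "\<dots> = (\<Sum>\<gamma>\<in>exponents_le (Suc n). c' \<gamma> * cart_monomial \<gamma> y)"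
      using E_subset
      by (intro sum.mono_neutral_cong_right[symmetric]) (auto simp: c'_def finite_exponents_le)
    finally show ?thesis .
  qed
  then show ?thesis
    unfolding poly_deg_le_iff_monomials by blast
qed

lemma poly_deg_le_inner_mult:
  assumes "poly_deg_le n f"
  shows "poly_deg_le (Suc n) (\<lambda>y::real^'n. (z \<bullet> y) * f y)"
proof -
  have "(z \<bullet> y) * f y = (\<Sum>i\<in>UNIV. z $ i * (y $ i * f y))" for y
    by (simp add: inner_vec_def sum_distrib_left mult_ac)
  then show ?thesis
    using assms by (simp add: poly_deg_le_sum poly_deg_le_cmult poly_deg_le_coordinate_mult)
qed

lemma poly_deg_le_inner_power: "poly_deg_le t (\<lambda>y::real^'n. (z \<bullet> y) ^ t)"
  by (induction t) (simp_all add: poly_deg_le_const poly_deg_le_inner_mult)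

section \<open>Caps and supports\<close>

lemma power2_inner_le_sin_power2_on_cap:
  fixes x z y :: "real^'n"
  assumes "norm x = 1" "norm z = 1" "x \<bullet> z = 0"
    and r: "0 \<le> r" "r \<le> pi / 2" and y: "y \<in> cap x r"
  shows "(z \<bullet> y)\<^sup>2 \<le> (sin r)\<^sup>2"
proof -
  have "cos r \<le> x \<bullet> y" "0 \<le> cos r" "y \<bullet> y = 1" "x \<bullet> x = 1" "z \<bullet> z = 1"
    using assms by (auto simp: cap_def dot_square_norm intro: cos_ge_zero)
  let ?w = "y - (x \<bullet> y) *\<^sub>R x - (z \<bullet> y) *\<^sub>R z"
  have "?w \<bullet> ?w = y \<bullet> y - (x \<bullet> y)\<^sup>2 - (z \<bullet> y)\<^sup>2"
    using \<open>x \<bullet> x = 1\<close> \<open>z \<bullet> z = 1\<close> \<open>x \<bullet> z = 0\<close>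
    by (simp add: inner_commute power2_eq_square algebra_simps)
  then have "(z \<bullet> y)\<^sup>2 \<le> 1 - (x \<bullet> y)\<^sup>2"
    using inner_ge_zero[of ?w] \<open>y \<bullet> y = 1\<close> by linarith
  also have "\<dots> \<le> 1 - (cos r)\<^sup>2"
    using \<open>cos r \<le> x \<bullet> y\<close> \<open>0 \<le> cos r\<close> by (simp add: power_mono)
  finally show ?thesis
    by (simp add: sin_squared_eq)
qed

lemma AE_in_measure_support:
  fixes \<mu> :: "'a::second_countable_topology measure"
  assumes "sets \<mu> = sets borel"
  shows "AE y in \<mu>. y \<in> measure_support \<mu>"
proof -
  let ?null_opens = "{U. open U \<and> emeasure \<mu> U = 0}"
  obtain F where F: "F \<subseteq> ?null_opens" "countable F" "\<Union>F = \<Union>?null_opens"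
    using Lindelof[of ?null_opens] by blast
  have "(\<Union>U\<in>F. U) \<in> null_sets \<mu>"
    using F assms by (intro null_sets_UN') (auto simp: null_sets_def)
  moreover have "{y \<in> space \<mu>. y \<notin> measure_support \<mu>} \<subseteq> (\<Union>U\<in>F. U)"
    using F(3) by (auto simp: measure_support_def not_less)
  ultimately show ?thesis
    by (rule AE_I')
qed

lemma (in finite_measure) integral_le_measure_mult_bound:
  fixes f :: "'a \<Rightarrow> real"
  assumes "0 \<le> B" "AE x in M. f x \<le> B"
  shows "(\<integral>x. f x \<partial>M) \<le> measure M (space M) * B"
proof -
  have "(\<integral>x. f x \<partial>M) \<le> (\<integral>x. B \<partial>M)"
    using assms by (intro integral_mono_AE') auto
  then show ?thesis
    by simp
qed

lemma exists_unit_orthogonal: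
  fixes x :: "real^'n"
  assumes "CARD('n) \<ge> 2"
  obtains z where "norm z = 1" "x \<bullet> z = 0"
proof -
  obtain w :: "real^'n" where "w \<noteq> 0" "orthogonal x w"
    using orthogonal_to_vector_exists[of x] assms by auto
  then show ?thesis
    by (intro that[of "w /\<^sub>R norm w"]) (auto simp: orthogonal_def)
qed

lemma integral_inner_power_le_on_cap:
  fixes \<mu> :: "(real^'n) measure"
  assumes "finite_measure \<mu>" "sets \<mu> = sets borel" "measure_support \<mu> \<subseteq> cap x r"
    and "norm x = 1" "norm z = 1" "x \<bullet> z = 0" "0 \<le> r" "r \<le> pi / 2"
  shows "(\<integral>y. ((z \<bullet> y) ^ t)\<^sup>2 \<partial>\<mu>) \<le> measure \<mu> (space \<mu>) * sin r ^ (2 * t)"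
proof -
  interpret finite_measure \<mu>
    by fact
  have power_eq: "(s ^ t)\<^sup>2 = (s\<^sup>2) ^ t" "(s\<^sup>2) ^ t = s ^ (2 * t)" for s :: real
    by (simp_all add: power_mult[symmetric] mult.commute)
  have "AE y in \<mu>. y \<in> cap x r"
    using AE_in_measure_support[of \<mu>] assms(2,3) by (auto elim!: AE_mp)
  then have "AE y in \<mu>. ((z \<bullet> y) ^ t)\<^sup>2 \<le> sin r ^ (2 * t)"
  proof eventually_elim
    case (elim y)
    then have "(z \<bullet> y)\<^sup>2 \<le> (sin r)\<^sup>2"
      using assms by (intro power2_inner_le_sin_power2_on_cap)
    then have "((z \<bullet> y)\<^sup>2) ^ t \<le> ((sin r)\<^sup>2) ^ t"
      by (rule power_mono) auto
    then show ?case
      by (simp only: power_eq)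
  qed
  then show ?thesis
    by (intro integral_le_measure_mult_bound) (simp_all flip: power_eq)
qed

theorem lemma4p2:
  fixes \<mu> :: "(real^'n) measure" and t :: nat and a r :: real and x :: "real^'n"
  assumes d_ge_1: "CARD('n) \<ge> 2"
    and t_ge_1: "t \<ge> 1"
    and borel_mu: "sets \<mu> = sets borel"
    and finite_mu: "finite_measure \<mu>"
    and on_sphere: "emeasure \<mu> (UNIV - sphere 0 1) = 0"
    and a_pos: "a > 0"
    and MZ: "\<And>f. poly_deg_le t f \<Longrightarrow>
              a * (\<integral>y. (f y)\<^sup>2 \<partial>sphere_measure) \<le> (\<integral>y. (f y)\<^sup>2 \<partial>\<mu>)"
    and r: "0 < r" "r \<le> pi / 2"
    and x: "x \<in> sphere 0 1"
    and supp: "measure_support \<mu> \<subseteq> cap x r"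
  shows "(sin r) ^ (2 * t) \<ge>
           a / measure \<mu> (sphere 0 1) * (\<integral>y. (x \<bullet> y) ^ (2 * t) \<partial>sphere_measure)"
proof -
  interpret finite_measure \<mu>
    by (rule finite_mu)
  obtain z :: "real^'n" where z: "norm z = 1" "x \<bullet> z = 0"
    using exists_unit_orthogonal d_ge_1 by blast
  let ?\<Lambda> = "\<integral>y. (x \<bullet> y) ^ (2 * t) \<partial>sphere_measure"
  have "(\<integral>y. ((z \<bullet> y) ^ t)\<^sup>2 \<partial>sphere_measure) = ?\<Lambda>"
    using integral_sphere_measure_inner_unit_vector[of x z "\<lambda>s. s ^ (2 * t)"] x z
    by (simp add: power_mult[symmetric] mult.commute)
  then have "a * ?\<Lambda> \<le> (\<integral>y. ((z \<bullet> y) ^ t)\<^sup>2 \<partial>\<mu>)"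
    using MZ[OF poly_deg_le_inner_power[where z=z]] by simp
  also have "\<dots> \<le> measure \<mu> (space \<mu>) * sin r ^ (2 * t)"
    using finite_mu borel_mu supp x z r by (intro integral_inner_power_le_on_cap) auto
  also have "measure \<mu> (space \<mu>) = measure \<mu> (sphere 0 1 \<union> (UNIV - sphere 0 1))"
    using sets_eq_imp_space_eq[OF borel_mu] by (simp add: Un_Diff_cancel)
  also have "\<dots> = measure \<mu> (sphere 0 1)"
    using on_sphere borel_mu by (intro measure_Un_null_set) (auto intro: null_setsI)
  finally have "a * ?\<Lambda> \<le> measure \<mu> (sphere 0 1) * sin r ^ (2 * t)" .
  moreover have "0 \<le> sin r ^ (2 * t)"
    by (simp add: zero_le_even_power)
  ultimately show ?thesis
    by (cases "measure \<mu> (sphere 0 1) = 0") (auto simp: field_simps zero_less_measure_iff)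
qed

end
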